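(* Let $Q\subset\mathrm{EX}(M)$. Then the topological boundary of $\iota_Q(M)$ in $Q(M)$ is $$\partial\iota_Q(M)=\bigcup_{(\alpha,U)\in Q}q\big(\partial_U\mathrm{ran}(\alpha)\big)=\bigcup_{(\alpha,U)\in Q}q\big(B(\alpha)\cap U\big),$$ where $\partial_U\mathrm{ran}(\alpha)$ is regarded as a subset of the component $N_{(\alpha,U)}$ of $N_Q$.
   Context: Conventions: $M$ is an $n$-dimensional smooth manifold (Hausdorff, second countable) with maximal $C^\infty$ atlas $\mathcal{A}(M)$; every chart $\alpha$ has open domain $\mathrm{dom}(\alpha)\subset M$ and open range $\mathrm{ran}(\alpha)\subset\mathbb{R}^n$. For $A\subset\mathbb{R}^n$, $\partial A$ is its boundary in $\mathbb{R}^n$; for $A\subset U\subset\mathbb{R}^n$, $\partial_U A$ is the boundary of $A$ relative to $U$. An admissible boundary point of $\alpha$ is a $p\in\partial\,\mathrm{ran}(\alpha)$ such that every sequence $(x_i)\subset\mathrm{dom}(\alpha)$ with $\alpha(x_i)\to p$ has no accumulation point in $M$; $B(\alpha)$ is the set of these. An extension is a pair $(\alpha,U)$, $U\subset\mathbb{R}^n$ open, $\mathrm{ran}(\alpha)\subset U$, $\emptyset\ne\partial_U\mathrm{ran}(\alpha)\subset B(\alpha)$; $\mathrm{EX}(M)$ is the set of extensions. A boundary set is $(\alpha,U,V)$ with $(\alpha,U)\in\mathrm{EX}(M)$, $V\subset B(\alpha)\cap U$ (a boundary point if $V=\{p\}$). $(\alpha,U,V)$ covers $(\beta,X,Y)$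 if for every sequence $(y_i)\subset\mathrm{dom}(\beta)$ with $(\beta(y_i))$ having an accumulation point in $Y$ there is a subsequence $(v_i)\subset\mathrm{dom}(\alpha)$ of $(y_i)$ with $(\alpha(v_i))$ having an accumulation point in $V$; they are equivalent, $\equiv$, if each covers the other. Completion: for $Q\subset\mathrm{EX}(M)$ let $P=\{(\alpha,\mathrm{ran}(\alpha)):\alpha\in\mathcal{A}(M)\}$, $S_Q=P\cup Q$, $N_{(\alpha,U)}=\mathrm{ran}(\alpha)\cup\partial_U\mathrm{ran}(\alpha)$ with subspace topology of $\mathbb{R}^n$, $N_Q=\bigsqcup_{(\alpha,U)\in S_Q}N_{(\alpha,U)}$ with disjoint-union topology. Identify $x\in N_{(\alpha,U)}$ with $y\in N_{(\beta,X)}$ iff either $x\in\mathrm{ran}(\alpha)$, $y\in\mathrm{ran}(\beta)$, $\beta\circ\alpha^{-1}(x)=y$, or $x\in\partial_U\mathrm{ran}(\alpha)$, $y\in\partial_X\mathrm{ran}(\beta)$, $(\alpha,U,\{x\})\equiv(\beta,X,\{y\})$. $Q(M)$ is the quotient space, $q:N_Q\to Q(M)$ the quotient map, and $\iota_Q:M\to Q(M)$, $\iota_Q(x)=q(\alpha(x))$ for any $\alpha\in\mathcal{A}(M)$ with $x\in\mathrm{dom}(\alpha)$ (with $\alpha(x)\in N_{(\alpha,\mathrm{ran}(\alpha))}$); this is independent of $\alpha$. *)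

theory Defs
  imports "HOL-Analysis.Analysis"
begin

text \<open>A real-valued function on an open set S of R^n is C-infinity iff it is continuous and all
  its partial derivatives exist on S and are again C-infinity (coinductively: partial
  derivatives of all orders exist and are continuous).\<close>

coinductive smooth_fun :: "(real^'n) set \<Rightarrow> (real^'n \<Rightarrow> real) \<Rightarrow> bool" for S where
  "continuous_on S g \<Longrightarrow>
   (\<And>i. \<exists>d. (\<forall>x\<in>S. ((\<lambda>t. g (x + t *\<^sub>R axis i 1)) has_real_derivative d x) (at 0))
            \<and> smooth_fun S d)
   \<Longrightarrow> smooth_fun S g"

definition smooth_map :: "(real^'n) set \<Rightarrow> (real^'n \<Rightarrow> real^'n) \<Rightarrow> bool" where
  "smooth_map S h \<longleftrightarrow> (\<forall>j. smooth_fun S (\<lambda>x. h x $ j))"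

type_synonym ('a,'n) chart = "'a set \<times> ('a \<Rightarrow> real^'n)"

definition cdom :: "('a,'n::finite) chart \<Rightarrow> 'a set" where "cdom c = fst c"
definition cmap :: "('a,'n::finite) chart \<Rightarrow> 'a \<Rightarrow> real^'n" where "cmap c = snd c"
definition cran :: "('a,'n::finite) chart \<Rightarrow> (real^'n) set" where "cran c = cmap c ` cdom c"

definition is_chart :: "'a topology \<Rightarrow> ('a,'n::finite) chart \<Rightarrow> bool" where
  "is_chart M c \<longleftrightarrow> openin M (cdom c) \<and> open (cran c) \<and>
     homeomorphic_map (subtopology M (cdom c)) (top_of_set (cran c)) (cmap c)"

definition transition :: "('a,'n::finite) chart \<Rightarrow> ('a,'n::finite) chart \<Rightarrow> real^'n \<Rightarrow> real^'n" where
  "transition \<alpha> \<beta> = cmap \<beta> \<circ> inv_into (cdom \<alpha>) (cmap \<alpha>)"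

definition smooth_compat :: "('a,'n::finite) chart \<Rightarrow> ('a,'n::finite) chart \<Rightarrow> bool" where
  "smooth_compat \<alpha> \<beta> \<longleftrightarrow>
     smooth_map (cmap \<alpha> ` (cdom \<alpha> \<inter> cdom \<beta>)) (transition \<alpha> \<beta>) \<and>
     smooth_map (cmap \<beta> ` (cdom \<alpha> \<inter> cdom \<beta>)) (transition \<beta> \<alpha>)"

text \<open>M (Hausdorff, second countable) with a maximal C-infinity atlas A of dimension CARD('n).\<close>
definition smooth_manifold :: "'a topology \<Rightarrow> ('a,'n::finite) chart set \<Rightarrow> bool" where
  "smooth_manifold M A \<longleftrightarrow> Hausdorff_space M \<and> second_countable M \<and>
     (\<forall>c\<in>A. is_chart M c) \<and> (\<Union>c\<in>A. cdom c) = topspace M \<and>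
     (\<forall>c\<in>A. \<forall>c'\<in>A. smooth_compat c c') \<and>
     (\<forall>c. is_chart M c \<and> (\<forall>c'\<in>A. smooth_compat c c') \<longrightarrow> c \<in> A)"

definition seq_acc_pt :: "'b topology \<Rightarrow> (nat \<Rightarrow> 'b) \<Rightarrow> 'b \<Rightarrow> bool" where
  "seq_acc_pt X x z \<longleftrightarrow> z \<in> topspace X \<and>
     (\<forall>V. openin X V \<and> z \<in> V \<longrightarrow> infinite {i. x i \<in> V})"

definition rel_bdry :: "(real^'n) set \<Rightarrow> (real^'n) set \<Rightarrow> (real^'n) set" where
  "rel_bdry U A = (top_of_set U) frontier_of A"

definition admissible_bdry :: "'a topology \<Rightarrow> ('a,'n::finite) chart \<Rightarrow> (real^'n) set" where
  "admissible_bdry M \<alpha> = {p \<in> frontier (cran \<alpha>).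
     \<forall>x. (\<forall>i. x i \<in> cdom \<alpha>) \<and> (\<lambda>i. cmap \<alpha> (x i)) \<longlonglongrightarrow> p \<longrightarrow>
         \<not> (\<exists>z. seq_acc_pt M x z)}"

type_synonym ('a,'n) ext = "('a,'n::finite) chart \<times> (real^'n) set"

definition extensions :: "'a topology \<Rightarrow> ('a,'n::finite) chart set \<Rightarrow> ('a,'n::finite) ext set" where
  "extensions M A = {(\<alpha>, U). \<alpha> \<in> A \<and> open U \<and> cran \<alpha> \<subseteq> U \<and>
      rel_bdry U (cran \<alpha>) \<noteq> {} \<and> rel_bdry U (cran \<alpha>) \<subseteq> admissible_bdry M \<alpha>}"

text \<open>(alpha,U,V) covers (beta,X,Y); U and X play no role in the definition.\<close>
definition covers :: "('a,'n::finite) chart \<Rightarrow> (real^'n) set \<Rightarrow> ('a,'n::finite) chart \<Rightarrow> (real^'n) set \<Rightarrow> bool" where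
  "covers \<alpha> V \<beta> Y \<longleftrightarrow>
     (\<forall>y. (\<forall>i. y i \<in> cdom \<beta>) \<and> (\<exists>p\<in>Y. seq_acc_pt euclidean (\<lambda>i. cmap \<beta> (y i)) p) \<longrightarrow>
        (\<exists>r. strict_mono r \<and> (\<forall>i. y (r i) \<in> cdom \<alpha>) \<and>
             (\<exists>p\<in>V. seq_acc_pt euclidean (\<lambda>i. cmap \<alpha> (y (r i))) p)))"

definition bequiv :: "('a,'n::finite) chart \<Rightarrow> (real^'n) set \<Rightarrow> ('a,'n::finite) chart \<Rightarrow> (real^'n) set \<Rightarrow> bool" where
  "bequiv \<alpha> V \<beta> Y \<longleftrightarrow> covers \<alpha> V \<beta> Y \<and> covers \<beta> Y \<alpha> V"

definition SQ :: "('a,'n::finite) chart set \<Rightarrow> ('a,'n::finite) ext set \<Rightarrow> ('a,'n::finite) ext set" where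
  "SQ A Q = {(\<alpha>, cran \<alpha>) | \<alpha>. \<alpha> \<in> A} \<union> Q"

definition Ncomp :: "('a,'n::finite) ext \<Rightarrow> (real^'n) set" where
  "Ncomp e = cran (fst e) \<union> rel_bdry (snd e) (cran (fst e))"

definition NQ :: "('a,'n::finite) chart set \<Rightarrow> ('a,'n::finite) ext set \<Rightarrow> (('a,'n::finite) ext \<times> (real^'n)) topology" where
  "NQ A Q = sum_topology (\<lambda>e. top_of_set (Ncomp e)) (SQ A Q)"

definition ident :: "('a,'n::finite) chart set \<Rightarrow> ('a,'n::finite) ext set \<Rightarrow> ((('a,'n::finite) ext \<times> (real^'n)) \<times> (('a,'n::finite) ext \<times> (real^'n))) set" where
  "ident A Q = {((e, x), (e', y)). (e, x) \<in> topspace (NQ A Q) \<and> (e', y) \<in> topspace (NQ A Q) \<and>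
     ((x \<in> cran (fst e) \<and> y \<in> cran (fst e') \<and>
        x \<in> cmap (fst e) ` (cdom (fst e) \<inter> cdom (fst e')) \<and> transition (fst e) (fst e') x = y) \<or>
      (x \<in> rel_bdry (snd e) (cran (fst e)) \<and> y \<in> rel_bdry (snd e') (cran (fst e')) \<and>
        bequiv (fst e) {x} (fst e') {y}))}"

definition identR :: "('a,'n::finite) chart set \<Rightarrow> ('a,'n::finite) ext set \<Rightarrow> ((('a,'n::finite) ext \<times> (real^'n)) \<times> (('a,'n::finite) ext \<times> (real^'n))) set" where
  "identR A Q = Id_on (topspace (NQ A Q)) \<union> (ident A Q \<union> (ident A Q)\<inverse>)\<^sup>+"

definition quotient_top :: "'b topology \<Rightarrow> ('b \<times> 'b) set \<Rightarrow> 'b set topology" where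
  "quotient_top X R = topology (\<lambda>W. W \<subseteq> topspace X // R \<and> openin X (\<Union>W))"

definition QM :: "('a,'n::finite) chart set \<Rightarrow> ('a,'n::finite) ext set \<Rightarrow> (('a,'n::finite) ext \<times> (real^'n)) set topology" where
  "QM A Q = quotient_top (NQ A Q) (identR A Q)"

definition qmap :: "('a,'n::finite) chart set \<Rightarrow> ('a,'n::finite) ext set \<Rightarrow> ('a,'n::finite) ext \<times> (real^'n) \<Rightarrow> (('a,'n::finite) ext \<times> (real^'n)) set" where
  "qmap A Q z = identR A Q `` {z}"

definition iotaQ :: "('a,'n::finite) chart set \<Rightarrow> ('a,'n::finite) ext set \<Rightarrow> 'a \<Rightarrow> (('a,'n::finite) ext \<times> (real^'n)) set" where
  "iotaQ A Q x = (let \<alpha> = (SOME \<alpha>. \<alpha> \<in> A \<and> x \<in> cdom \<alpha>) in qmap A Q ((\<alpha>, cran \<alpha>), cmap \<alpha> x))"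

end

theory Submission
  imports Defs
begin

text \<open>Write S = iota_Q(M) and let B be the set of classes of the added boundary points
  (the relative boundaries of ran(alpha) in U, for (alpha,U) in Q).  The proof rests on
  three facts about the quotient map q from N_Q to Q(M):
  (1) the identification never relates a chart point (a point of some ran(alpha)) to an added
      boundary point, so the union of the classes in S is exactly the open set of chart
      points of N_Q, whence S is open in Q(M);
  (2) every point of Q(M) lies in S or in B, and S and B are disjoint;
  (3) q is continuous and each added boundary point is a limit of chart points inside its
      component, so B lies in the closure of S.
  Hence the frontier of S, which equals closure(S) - S as S is open, is B.  The second equation
  is the fact that for an extension (alpha,U) the relative boundary of ran(alpha) in U
  coincides with the admissible boundary points in U.\<close>

text \<open>A set of classes is open iff its union is open in X; the disjointness of distinct
  classes makes this family closed under finite intersections.\<close>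
lemma quotient_top_istopology:
  assumes "equiv (topspace X) R"
  shows "istopology (\<lambda>W. W \<subseteq> topspace X // R \<and> openin X (\<Union>W))"
proof -
  have Int: "S \<inter> T \<subseteq> topspace X // R \<and> openin X (\<Union>(S \<inter> T))"
    if "S \<subseteq> topspace X // R \<and> openin X (\<Union>S)" "T \<subseteq> topspace X // R \<and> openin X (\<Union>T)" for S T
  proof -
    have "\<Union>(S \<inter> T) = \<Union>S \<inter> \<Union>T"
      using quotient_disj[OF assms] that by blast
    then show ?thesis using that by auto
  qed
  have Union: "\<Union>K \<subseteq> topspace X // R \<and> openin X (\<Union>(\<Union>K))"
    if "\<forall>W\<in>K. W \<subseteq> topspace X // R \<and> openin X (\<Union>W)" for K
  proof -
    have "\<Union>(\<Union>K) = (\<Union>W\<in>K. \<Union>W)" by blast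
    then show ?thesis using that by auto
  qed
  show ?thesis
    unfolding istopology_def using Int Union by blast
qed

lemma openin_quotient_top:
  assumes "equiv (topspace X) R"
  shows "openin (quotient_top X R) W \<longleftrightarrow> W \<subseteq> topspace X // R \<and> openin X (\<Union>W)"
  unfolding quotient_top_def using quotient_top_istopology[OF assms] by simp

lemma topspace_quotient_top:
  assumes "equiv (topspace X) R"
  shows "topspace (quotient_top X R) = topspace X // R"
proof -
  have "openin (quotient_top X R) (topspace X // R)"
    using assms by (simp add: openin_quotient_top Union_quotient)
  then show ?thesis
    using openin_quotient_top[OF assms] unfolding topspace_def by blast
qed

text \<open>The quotient map z \<mapsto> [z] is continuous: the preimage of a set of classes is its union.\<close>
lemma continuous_map_quotient_top:
  assumes R: "equiv (topspace X) R"
  shows "continuous_map X (quotient_top X R) (\<lambda>z. R `` {z})"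
  unfolding continuous_map_def topspace_quotient_top[OF R]
proof (intro conjI allI impI)
  show "(\<lambda>z. R `` {z}) \<in> topspace X \<rightarrow> topspace X // R"
    by (auto intro: quotientI)
  fix W assume "openin (quotient_top X R) W"
  then have W: "W \<subseteq> topspace X // R" "openin X (\<Union>W)"
    using openin_quotient_top[OF R] by auto
  have "{z \<in> topspace X. R `` {z} \<in> W} = \<Union>W"
  proof (intro equalityI subsetI)
    fix z assume "z \<in> {z \<in> topspace X. R `` {z} \<in> W}"
    then show "z \<in> \<Union>W"
      using equiv_class_self[OF R] by blast
  next
    fix z assume "z \<in> \<Union>W"
    then obtain c where c: "c \<in> W" "z \<in> c" by blast
    then obtain w where "w \<in> topspace X" "c = R `` {w}"
      using W(1) by (auto elim: quotientE)
    then have "R `` {z} = c"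
      using c(2) equiv_class_eq[OF R] by simp
    moreover have "z \<in> topspace X"
      using c W(1) in_quotient_imp_subset[OF R] by blast
    ultimately show "z \<in> {z \<in> topspace X. R `` {z} \<in> W}"
      using c(1) by simp
  qed
  then show "openin X {z \<in> topspace X. R `` {z} \<in> W}"
    using W(2) by simp
qed

lemma identR_equiv: "equiv (topspace (NQ A Q)) (identR A Q)"
proof -
  let ?T = "topspace (NQ A Q)" and ?S = "ident A Q \<union> (ident A Q)\<inverse>"
  have "?S \<subseteq> ?T \<times> ?T"
    unfolding ident_def by auto
  then have "?S\<^sup>+ \<subseteq> ?T \<times> ?T"
    using trancl_subset_Sigma by blast
  then have "identR A Q \<subseteq> ?T \<times> ?T" "refl_on ?T (identR A Q)"
    unfolding identR_def refl_on_def by blast+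
  moreover have "sym (identR A Q)"
    unfolding identR_def by (intro sym_Un sym_Id_on) (simp add: sym_Un_converse sym_trancl)
  moreover have "trans (identR A Q)"
  proof (rule transI)
    fix x y z assume "(x, y) \<in> identR A Q" "(y, z) \<in> identR A Q"
    then show "(x, z) \<in> identR A Q"
      unfolding identR_def using trancl_trans[of x y ?S z] by blast
  qed
  ultimately show ?thesis
    unfolding equiv_def by blast
qed

lemma topspace_NQ: "topspace (NQ A Q) = Sigma (SQ A Q) Ncomp"
  by (simp add: NQ_def o_def)

lemma rel_bdry_open: "open U \<Longrightarrow> rel_bdry U S = U \<inter> frontier S"
  unfolding rel_bdry_def
  by (simp add: frontier_of_subtopology_open euclidean_frontier_of)

lemma rel_bdry_self: "rel_bdry S S = {}"
  unfolding rel_bdry_def by (metis frontier_of_topspace topspace_euclidean_subtopology)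

lemma chart_range_open:
  assumes "smooth_manifold M A" and "\<alpha> \<in> A"
  shows "open (cran \<alpha>)"
  using assms unfolding smooth_manifold_def is_chart_def by blast

lemma SQ_component:
  assumes M: "smooth_manifold M A" and Q: "Q \<subseteq> extensions M A" and e: "e \<in> SQ A Q"
  shows "fst e \<in> A \<and> open (snd e) \<and> open (cran (fst e))"
proof -
  have "fst e \<in> A \<and> open (snd e)"
  proof (cases "e \<in> Q")
    case True
    then show ?thesis
      using Q unfolding extensions_def by auto
  next
    case False
    then show ?thesis
      using e chart_range_open[OF M] unfolding SQ_def by auto
  qed
  then show ?thesis
    using chart_range_open[OF M] by blast
qed

text \<open>Since ran(alpha) is open, its relative boundary points do not lie in ran(alpha): each component
  N_(alpha,U) is the disjoint union of ran(alpha) and the added boundary points.\<close>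
lemma rel_bdry_disjoint_range:
  assumes M: "smooth_manifold M A" and Q: "Q \<subseteq> extensions M A" and e: "e \<in> SQ A Q"
  shows "rel_bdry (snd e) (cran (fst e)) \<inter> cran (fst e) = {}"
  using SQ_component[OF M Q e] rel_bdry_open[of "snd e" "cran (fst e)"]
  by (auto simp: frontier_def interior_open)

definition chart_points :: "('a,'n::finite) chart set \<Rightarrow> ('a,'n) ext set \<Rightarrow> (('a,'n) ext \<times> (real^'n)) set" where
  "chart_points A Q = {z \<in> topspace (NQ A Q). snd z \<in> cran (fst (fst z))}"

lemma ident_preserves_chart_point:
  assumes M: "smooth_manifold M A" and Q: "Q \<subseteq> extensions M A" and zw: "(z, w) \<in> ident A Q"
  shows "z \<in> chart_points A Q \<longleftrightarrow> w \<in> chart_points A Q"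
proof -
  obtain e x e' y where zw_eq: "z = (e, x)" "w = (e', y)" by (cases z, cases w) auto
  have T: "z \<in> topspace (NQ A Q)" "w \<in> topspace (NQ A Q)"
    using zw unfolding ident_def by auto
  then have "e \<in> SQ A Q" "e' \<in> SQ A Q"
    using zw_eq by (auto simp: topspace_NQ)
  then have "rel_bdry (snd e) (cran (fst e)) \<inter> cran (fst e) = {}"
            "rel_bdry (snd e') (cran (fst e')) \<inter> cran (fst e') = {}"
    using rel_bdry_disjoint_range[OF M Q] by auto
  moreover have "(x \<in> cran (fst e) \<and> y \<in> cran (fst e')) \<or>
      (x \<in> rel_bdry (snd e) (cran (fst e)) \<and> y \<in> rel_bdry (snd e') (cran (fst e')))"
    using zw unfolding zw_eq ident_def by (simp only: mem_Collect_eq case_prod_conv) blast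
  ultimately show ?thesis
    using T unfolding zw_eq chart_points_def by (simp only: mem_Collect_eq fst_conv snd_conv) blast
qed

lemma identR_preserves_chart_point:
  assumes M: "smooth_manifold M A" and Q: "Q \<subseteq> extensions M A" and zw: "(z, w) \<in> identR A Q"
  shows "z \<in> chart_points A Q \<longleftrightarrow> w \<in> chart_points A Q"
proof -
  have "z \<in> chart_points A Q \<longleftrightarrow> w \<in> chart_points A Q"
    if "(z, w) \<in> (ident A Q \<union> (ident A Q)\<inverse>)\<^sup>+" for z w
    using that
  proof (induction rule: trancl_induct)
    case (base w)
    then show ?case using ident_preserves_chart_point[OF M Q] by blast
  next
    case (step w u)
    then show ?case using ident_preserves_chart_point[OF M Q] by blast
  qed
  then show ?thesis
    using zw unfolding identR_def by blast
qed

lemma openin_chart_points: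
  assumes M: "smooth_manifold M A" and Q: "Q \<subseteq> extensions M A"
  shows "openin (NQ A Q) (chart_points A Q)"
  unfolding NQ_def openin_sum_topology
proof
  show "chart_points A Q \<subseteq> Sigma (SQ A Q) (topspace \<circ> (\<lambda>e. top_of_set (Ncomp e)))"
    unfolding chart_points_def by (simp add: NQ_def o_def)
  show "\<forall>e\<in>SQ A Q. openin (top_of_set (Ncomp e)) {x. (e, x) \<in> chart_points A Q}"
  proof
    fix e assume e: "e \<in> SQ A Q"
    have "{x. (e, x) \<in> chart_points A Q} = Ncomp e \<inter> cran (fst e)"
      using e unfolding chart_points_def topspace_NQ by auto
    then show "openin (top_of_set (Ncomp e)) {x. (e, x) \<in> chart_points A Q}"
      using SQ_component[OF M Q e] by (simp add: openin_open_Int)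
  qed
qed

lemma iotaQ_representative:
  assumes M: "smooth_manifold M A" and y: "y \<in> topspace M"
  obtains \<beta> where "\<beta> \<in> A" "y \<in> cdom \<beta>"
    "iotaQ A Q y = qmap A Q ((\<beta>, cran \<beta>), cmap \<beta> y)"
    "((\<beta>, cran \<beta>), cmap \<beta> y) \<in> chart_points A Q"
proof -
  define \<beta> where "\<beta> = (SOME \<alpha>. \<alpha> \<in> A \<and> y \<in> cdom \<alpha>)"
  have "\<exists>\<alpha>. \<alpha> \<in> A \<and> y \<in> cdom \<alpha>"
    using M y unfolding smooth_manifold_def by blast
  then have \<beta>: "\<beta> \<in> A" "y \<in> cdom \<beta>"
    unfolding \<beta>_def by (metis (mono_tags, lifting) someI_ex)+
  moreover have "(\<beta>, cran \<beta>) \<in> SQ A Q"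
    using \<beta> unfolding SQ_def by blast
  ultimately have "((\<beta>, cran \<beta>), cmap \<beta> y) \<in> chart_points A Q"
    by (auto simp: chart_points_def topspace_NQ Ncomp_def cran_def)
  moreover have "iotaQ A Q y = qmap A Q ((\<beta>, cran \<beta>), cmap \<beta> y)"
    unfolding iotaQ_def \<beta>_def Let_def ..
  ultimately show thesis
    using that \<beta> by blast
qed

text \<open>Conversely, the class of every chart point alpha(y) equals iota_Q(y): it is identified with
  beta(y) through the transition map beta o alpha^-1.\<close>
lemma qmap_chart_point:
  assumes M: "smooth_manifold M A" and Q: "Q \<subseteq> extensions M A"
    and z: "z \<in> chart_points A Q"
  shows "qmap A Q z \<in> iotaQ A Q ` topspace M"
proof -
  obtain e x where z_eq: "z = (e, x)" by (cases z)
  have e: "e \<in> SQ A Q" and x: "x \<in> cran (fst e)"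
    using z unfolding z_eq chart_points_def topspace_NQ by auto
  let ?\<alpha> = "fst e"
  have chart: "is_chart M ?\<alpha>"
    using M SQ_component[OF M Q e] unfolding smooth_manifold_def by blast
  obtain y where y: "y \<in> cdom ?\<alpha>" "x = cmap ?\<alpha> y"
    using x unfolding cran_def by auto
  have yM: "y \<in> topspace M"
    using chart y openin_subset unfolding is_chart_def by blast
  have "inj_on (cmap ?\<alpha>) (cdom ?\<alpha>)"
    using chart homeomorphic_imp_injective_map openin_subset
    unfolding is_chart_def by (metis topspace_subtopology_subset)
  then have transition: "transition ?\<alpha> \<beta> x = cmap \<beta> y" for \<beta>
    unfolding transition_def using y by simp
  obtain \<beta> where \<beta>: "\<beta> \<in> A" "y \<in> cdom \<beta>"
      "iotaQ A Q y = qmap A Q ((\<beta>, cran \<beta>), cmap \<beta> y)"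
      "((\<beta>, cran \<beta>), cmap \<beta> y) \<in> chart_points A Q"
    using iotaQ_representative[OF M yM] by blast
  have "(z, ((\<beta>, cran \<beta>), cmap \<beta> y)) \<in> ident A Q"
    using z \<beta> y x transition unfolding ident_def z_eq chart_points_def
    by (auto simp: cran_def)
  then have "(z, ((\<beta>, cran \<beta>), cmap \<beta> y)) \<in> identR A Q"
    unfolding identR_def by blast
  then have "qmap A Q z = iotaQ A Q y"
    unfolding \<beta>(3) qmap_def using equiv_class_eq[OF identR_equiv] by blast
  then show ?thesis
    using yM by blast
qed

lemma Union_iotaQ_image:
  assumes M: "smooth_manifold M A" and Q: "Q \<subseteq> extensions M A"
  shows "\<Union>(iotaQ A Q ` topspace M) = chart_points A Q"
proof (intro equalityI subsetI)
  fix w assume "w \<in> \<Union>(iotaQ A Q ` topspace M)"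
  then obtain y where y: "y \<in> topspace M" "w \<in> iotaQ A Q y" by blast
  obtain \<beta> where \<beta>: "iotaQ A Q y = qmap A Q ((\<beta>, cran \<beta>), cmap \<beta> y)"
      "((\<beta>, cran \<beta>), cmap \<beta> y) \<in> chart_points A Q"
    using iotaQ_representative[OF M y(1)] by blast
  have "(((\<beta>, cran \<beta>), cmap \<beta> y), w) \<in> identR A Q"
    using y(2) unfolding \<beta>(1) qmap_def by simp
  then show "w \<in> chart_points A Q"
    using identR_preserves_chart_point[OF M Q] \<beta>(2) by blast
next
  fix z assume z: "z \<in> chart_points A Q"
  then have "z \<in> qmap A Q z"
    unfolding qmap_def chart_points_def using equiv_class_self[OF identR_equiv] by blast
  then show "z \<in> \<Union>(iotaQ A Q ` topspace M)"
    using qmap_chart_point[OF M Q z] by blast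
qed

lemma openin_iotaQ_image:
  assumes M: "smooth_manifold M A" and Q: "Q \<subseteq> extensions M A"
  shows "openin (QM A Q) (iotaQ A Q ` topspace M)"
proof -
  have "iotaQ A Q ` topspace M \<subseteq> topspace (NQ A Q) // identR A Q"
  proof
    fix c assume "c \<in> iotaQ A Q ` topspace M"
    then obtain y where y: "y \<in> topspace M" "c = iotaQ A Q y" by blast
    obtain \<beta> where "c = qmap A Q ((\<beta>, cran \<beta>), cmap \<beta> y)"
        "((\<beta>, cran \<beta>), cmap \<beta> y) \<in> chart_points A Q"
      using iotaQ_representative[OF M y(1)] y(2) by metis
    then show "c \<in> topspace (NQ A Q) // identR A Q"
      unfolding qmap_def chart_points_def by (auto intro: quotientI)
  qed
  then show ?thesis
    unfolding QM_def openin_quotient_top[OF identR_equiv] Union_iotaQ_image[OF M Q]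
    using openin_chart_points[OF M Q] by blast
qed

definition boundary_classes :: "('a,'n::finite) chart set \<Rightarrow> ('a,'n) ext set \<Rightarrow> (('a,'n) ext \<times> (real^'n)) set set" where
  "boundary_classes A Q = (\<Union>e\<in>Q. qmap A Q ` ({e} \<times> rel_bdry (snd e) (cran (fst e))))"

text \<open>No boundary class belongs to iota_Q(M), since it contains a point that is not a chart point.\<close>
lemma boundary_classes_disjoint_iotaQ_image:
  assumes M: "smooth_manifold M A" and Q: "Q \<subseteq> extensions M A"
  shows "boundary_classes A Q \<inter> iotaQ A Q ` topspace M = {}"
proof -
  have "qmap A Q (e, p) \<notin> iotaQ A Q ` topspace M"
    if e: "e \<in> Q" and p: "p \<in> rel_bdry (snd e) (cran (fst e))" for e p
  proof
    assume "qmap A Q (e, p) \<in> iotaQ A Q ` topspace M"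
    have eS: "e \<in> SQ A Q"
      using e unfolding SQ_def by blast
    then have "(e, p) \<in> topspace (NQ A Q)"
      using p unfolding topspace_NQ Ncomp_def by auto
    then have "(e, p) \<in> qmap A Q (e, p)"
      unfolding qmap_def using equiv_class_self[OF identR_equiv] by blast
    then have "(e, p) \<in> chart_points A Q"
      using \<open>qmap A Q (e, p) \<in> iotaQ A Q ` topspace M\<close> Union_iotaQ_image[OF M Q] by blast
    then show False
      using p rel_bdry_disjoint_range[OF M Q eS] unfolding chart_points_def by auto
  qed
  then show ?thesis
    unfolding boundary_classes_def by blast
qed

lemma topspace_QM_subset:
  assumes M: "smooth_manifold M A" and Q: "Q \<subseteq> extensions M A"
  shows "topspace (QM A Q) \<subseteq> iotaQ A Q ` topspace M \<union> boundary_classes A Q"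
proof
  fix c assume "c \<in> topspace (QM A Q)"
  then obtain z where z: "z \<in> topspace (NQ A Q)" "c = qmap A Q z"
    unfolding QM_def topspace_quotient_top[OF identR_equiv] qmap_def by (auto elim: quotientE)
  obtain e x where z_eq: "z = (e, x)" by (cases z)
  have e: "e \<in> SQ A Q" "x \<in> Ncomp e"
    using z unfolding z_eq topspace_NQ by auto
  show "c \<in> iotaQ A Q ` topspace M \<union> boundary_classes A Q"
  proof (cases "x \<in> cran (fst e)")
    case True
    then have "z \<in> chart_points A Q"
      using z unfolding z_eq chart_points_def by simp
    then show ?thesis
      using qmap_chart_point[OF M Q] z(2) by blast
  next
    case False
    then have x: "x \<in> rel_bdry (snd e) (cran (fst e))"
      using e unfolding Ncomp_def by blast
    then have "e \<in> Q"
      using e(1) rel_bdry_self unfolding SQ_def by fastforce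
    then show ?thesis
      using x z(2) unfolding z_eq boundary_classes_def by blast
  qed
qed

text \<open>Every boundary class lies in the closure of iota_Q(M): a relative boundary point p of
  ran(alpha) is a limit of points of ran(alpha) within N_(alpha,U), and the composite
  N_(alpha,U) -> N_Q -> Q(M) is continuous and sends ran(alpha) into iota_Q(M).\<close>
lemma boundary_classes_subset_closure:
  assumes M: "smooth_manifold M A" and Q: "Q \<subseteq> extensions M A"
  shows "boundary_classes A Q \<subseteq> (QM A Q) closure_of (iotaQ A Q ` topspace M)"
proof -
  have "qmap A Q (e, p) \<in> (QM A Q) closure_of (iotaQ A Q ` topspace M)"
    if e: "e \<in> Q" and p: "p \<in> rel_bdry (snd e) (cran (fst e))" for e p
  proof -
    have eS: "e \<in> SQ A Q"
      using e unfolding SQ_def by blast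
    let ?f = "\<lambda>x. qmap A Q (e, x)"
    have "continuous_map (top_of_set (Ncomp e)) (NQ A Q) (\<lambda>x. (e, x))"
      unfolding NQ_def using continuous_map_component_injection[OF eS] .
    then have "continuous_map (top_of_set (Ncomp e)) (QM A Q) ?f"
      using continuous_map_compose continuous_map_quotient_top[OF identR_equiv]
      unfolding QM_def qmap_def o_def by fastforce
    moreover have "p \<in> top_of_set (Ncomp e) closure_of cran (fst e)"
    proof -
      have "p \<in> frontier (cran (fst e))"
        using p rel_bdry_open SQ_component[OF M Q eS] by blast
      then show ?thesis
        using p by (simp add: closure_of_subtopology frontier_def Ncomp_def Int_absorb1)
    qed
    ultimately have "?f p \<in> (QM A Q) closure_of (?f ` cran (fst e))"
      using continuous_map_image_closure_subset by blast
    moreover have "?f ` cran (fst e) \<subseteq> iotaQ A Q ` topspace M"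
    proof
      fix c assume "c \<in> ?f ` cran (fst e)"
      then obtain x where x: "x \<in> cran (fst e)" "c = ?f x" by blast
      then have "(e, x) \<in> chart_points A Q"
        using eS by (simp add: chart_points_def topspace_NQ Ncomp_def)
      then show "c \<in> iotaQ A Q ` topspace M"
        using qmap_chart_point[OF M Q] x(2) by blast
    qed
    ultimately show ?thesis
      using closure_of_mono by blast
  qed
  then show ?thesis
    unfolding boundary_classes_def by blast
qed

lemma rel_bdry_extension:
  assumes "(\<alpha>, U) \<in> extensions M A"
  shows "rel_bdry U (cran \<alpha>) = admissible_bdry M \<alpha> \<inter> U"
proof -
  have "open U" "rel_bdry U (cran \<alpha>) \<subseteq> admissible_bdry M \<alpha>"
    using assms unfolding extensions_def by auto
  moreover have "admissible_bdry M \<alpha> \<subseteq> frontier (cran \<alpha>)"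
    unfolding admissible_bdry_def by auto
  ultimately show ?thesis
    using rel_bdry_open by blast
qed

theorem mainTheorem4:
  fixes M :: "'a topology" and A :: "('a,'n::finite) chart set" and Q :: "('a,'n) ext set"
  assumes "smooth_manifold M A"
    and "Q \<subseteq> extensions M A"
  shows "(QM A Q) frontier_of (iotaQ A Q ` topspace M)
           = (\<Union>e\<in>Q. qmap A Q ` ({e} \<times> rel_bdry (snd e) (cran (fst e))))
       \<and> (\<Union>e\<in>Q. qmap A Q ` ({e} \<times> rel_bdry (snd e) (cran (fst e))))
           = (\<Union>e\<in>Q. qmap A Q ` ({e} \<times> (admissible_bdry M (fst e) \<inter> snd e)))"
proof
  let ?S = "iotaQ A Q ` topspace M"
  have "(QM A Q) frontier_of ?S = (QM A Q) closure_of ?S - ?S"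
    using frontier_of_openin[OF openin_iotaQ_image[OF assms]] .
  also have "\<dots> = boundary_classes A Q"
    using closure_of_subset_topspace[of "QM A Q" ?S] topspace_QM_subset[OF assms]
      boundary_classes_subset_closure[OF assms] boundary_classes_disjoint_iotaQ_image[OF assms]
    by blast
  finally show "(QM A Q) frontier_of ?S
      = (\<Union>e\<in>Q. qmap A Q ` ({e} \<times> rel_bdry (snd e) (cran (fst e))))"
    unfolding boundary_classes_def .
next
  have "rel_bdry (snd e) (cran (fst e)) = admissible_bdry M (fst e) \<inter> snd e" if "e \<in> Q" for e
    using rel_bdry_extension[of "fst e" "snd e"] that assms(2) by auto
  then show "(\<Union>e\<in>Q. qmap A Q ` ({e} \<times> rel_bdry (snd e) (cran (fst e))))
      = (\<Union>e\<in>Q. qmap A Q ` ({e} \<times> (admissible_bdry M (fst e) \<inter> snd e)))"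
    by simp
qed
end
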